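(* Let $Z_1,\dots,Z_d$ be nonzero complex numbers with $|Z_1|\le\cdots\le|Z_d|$, not all of the same modulus, let $R=\min\{|Z_{i+1}|/|Z_i| : |Z_{i+1}|>|Z_i|\}$ and $I=\{i: 1\le i\le d-1,\ |Z_i|<|Z_{i+1}|\}\cup\{0,d\}$. Then for every $i\in I$, \[ \sigma_{d-i}(Z)=Z_{i+1}Z_{i+2}\cdots Z_d\,(1+c) \] for some complex $c$ with $|c|\le\left(\binom{d}{i}-1\right)R^{-1}\le 2^dR^{-1}$.
   Context: $\sigma_k(Z)=\sum_{j_1<\dots<j_k}Z_{j_1}\cdots Z_{j_k}$ denotes the $k$-th elementary symmetric function of $Z=(Z_1,\dots,Z_d)$, with $\sigma_0=1$; an empty product equals $1$. *)

theory Defs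
  imports "HOL-Analysis.Analysis"
begin

definition esym :: "nat \<Rightarrow> nat \<Rightarrow> (nat \<Rightarrow> complex) \<Rightarrow> complex" where
  "esym d k Z = (\<Sum>S\<in>{S. S \<subseteq> {1..d} \<and> card S = k}. \<Prod>j\<in>S. Z j)"

definition gapR :: "nat \<Rightarrow> (nat \<Rightarrow> complex) \<Rightarrow> real" where
  "gapR d Z = Min {norm (Z (i+1)) / norm (Z i) | i. 1 \<le> i \<and> i \<le> d - 1 \<and> norm (Z i) < norm (Z (i+1))}"

definition jumpI :: "nat \<Rightarrow> (nat \<Rightarrow> complex) \<Rightarrow> nat set" where
  "jumpI d Z = {i. 1 \<le> i \<and> i \<le> d - 1 \<and> norm (Z i) < norm (Z (i+1))} \<union> {0, d}"

end

theory Submission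
  imports Defs
begin

text \<open>
  Fix \<open>i \<in> I\<close> and let \<open>T = {i+1..d}\<close>. Every other \<open>(d - i)\<close>-subset \<open>S\<close> of \<open>{1..d}\<close>
  arises from \<open>T\<close> by exchanging some \<open>k \<ge> 1\<close> indices \<open>> i\<close> for as many indices \<open>\<le> i\<close>.
  Since the moduli jump by a factor of at least \<open>R\<close> from \<open>i\<close> to \<open>i + 1\<close>, the exchange costs
  a factor \<open>R\<^sup>k \<ge> R\<close>, so \<open>|\<Prod>\<^sub>S Z| \<le> |\<Prod>\<^sub>T Z| / R\<close>. Hence \<open>\<Prod>\<^sub>T Z\<close> dominates
  the remaining \<open>binom(d, i) - 1\<close> terms of \<open>\<sigma>\<^sub>d\<^sub>-\<^sub>i(Z)\<close>.
\<close>

lemma sum_eq_dominant_term_mult: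
  fixes f :: "'a \<Rightarrow> 'b::real_normed_field"
  assumes "finite F" "t \<in> F" "f t \<noteq> 0" "R > 0"
    and dominated: "\<And>s. s \<in> F - {t} \<Longrightarrow> norm (f s) * R \<le> norm (f t)"
  shows "\<exists>c. sum f F = f t * (1 + c) \<and> norm c \<le> (real (card F) - 1) / R"
proof -
  let ?c = "sum f (F - {t}) / f t"
  have "norm (sum f (F - {t})) \<le> (\<Sum>s\<in>F - {t}. norm (f s))"
    by (rule norm_sum)
  also have "\<dots> \<le> (\<Sum>s\<in>F - {t}. norm (f t) / R)"
    using dominated \<open>R > 0\<close> by (intro sum_mono) (simp add: pos_le_divide_eq)
  also have "\<dots> = (real (card F) - 1) * norm (f t) / R"
    using card.remove[OF assms(1,2)] by simp
  finally have "norm (sum f (F - {t})) \<le> (real (card F) - 1) * norm (f t) / R" .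
  then have "norm ?c \<le> (real (card F) - 1) * norm (f t) / R / norm (f t)"
    unfolding norm_divide by (rule divide_right_mono) simp
  then have "norm ?c \<le> (real (card F) - 1) / R"
    using \<open>f t \<noteq> 0\<close> by simp
  moreover have "sum f F = f t * (1 + ?c)"
    using \<open>f t \<noteq> 0\<close> sum.remove[OF assms(1,2)] by (simp add: distrib_left)
  ultimately show ?thesis by blast
qed

lemma norm_prod_exchange_le:
  fixes Z :: "'a \<Rightarrow> 'b::real_normed_field"
  assumes "finite S" "finite T" "card S = card T" "S \<noteq> T" "R \<ge> 1"
    and small: "\<And>a. a \<in> S - T \<Longrightarrow> norm (Z a) \<le> x"
    and large: "\<And>b. b \<in> T - S \<Longrightarrow> x * R \<le> norm (Z b)"
  shows "norm (prod Z S) * R \<le> norm (prod Z T)"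
proof -
  define k where "k = card (S - T)"
  have card_swap: "card (T - S) = k"
    unfolding k_def using assms(1-3) card_Diff_subset_Int[of S T] card_Diff_subset_Int[of T S]
    by (simp add: Int_commute)
  have "S - T \<noteq> {}"
    using card_subset_eq[OF assms(2)] assms(3,4) by blast
  then obtain a where "a \<in> S - T" by blast
  have "x \<ge> 0" using small[OF \<open>a \<in> S - T\<close>] by (rule order_trans[OF norm_ge_zero])
  have "k \<ge> 1"
    unfolding k_def using \<open>S - T \<noteq> {}\<close> assms(1) by (simp add: Suc_leI card_gt_0_iff)
  have "norm (prod Z (S - T)) * R \<le> x ^ k * R ^ k"
  proof (rule mult_mono)
    have "(\<Prod>a\<in>S - T. norm (Z a)) \<le> (\<Prod>a\<in>S - T. x)"
      using small by (intro prod_mono) auto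
    then show "norm (prod Z (S - T)) \<le> x ^ k"
      by (simp add: prod_norm k_def)
    show "R \<le> R ^ k"
      using power_increasing[of 1 k R] \<open>R \<ge> 1\<close> \<open>k \<ge> 1\<close> by simp
  qed (use \<open>x \<ge> 0\<close> \<open>R \<ge> 1\<close> in auto)
  also have "\<dots> = (\<Prod>b\<in>T - S. x * R)"
    using card_swap by (simp add: power_mult_distrib)
  also have "\<dots> \<le> norm (prod Z (T - S))"
    unfolding prod_norm[symmetric] using large \<open>x \<ge> 0\<close> \<open>R \<ge> 1\<close> by (intro prod_mono) auto
  finally have exchange: "norm (prod Z (S - T)) * R \<le> norm (prod Z (T - S))" .
  have "norm (prod Z S) * R = norm (prod Z (S \<inter> T)) * (norm (prod Z (S - T)) * R)"
    by (simp add: prod.Int_Diff[OF assms(1), of _ T] norm_mult)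
  also have "\<dots> \<le> norm (prod Z (S \<inter> T)) * norm (prod Z (T - S))"
    by (rule mult_left_mono[OF exchange norm_ge_zero])
  also have "\<dots> = norm (prod Z T)"
    by (simp add: prod.Int_Diff[OF assms(2), of _ S] norm_mult Int_commute)
  finally show ?thesis .
qed

lemma ex_strict_step_if_nonconstant:
  fixes f :: "nat \<Rightarrow> 'a::linorder"
  assumes mono: "\<And>i. 1 \<le> i \<Longrightarrow> i < d \<Longrightarrow> f i \<le> f (i+1)"
    and nonconstant: "\<exists>i\<in>{1..d}. \<exists>j\<in>{1..d}. f i \<noteq> f j"
  shows "\<exists>i. 1 \<le> i \<and> i \<le> d - 1 \<and> f i < f (i+1)"
proof (rule ccontr)
  assume "\<not> ?thesis"
  then have flat: "f (Suc n) = f n" if "n \<in> {1..<d}" for n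
    using that mono[of n] by fastforce
  have flat_ivl: "f a = f b" if "1 \<le> a" "a \<le> b" "b \<le> d" for a b
  proof (rule antisym)
    show "f a \<le> f b"
      by (rule lift_Suc_mono_le_ivl[of "{1..<d}"]) (use that flat in auto)
    show "f b \<le> f a"
      by (rule lift_Suc_antimono_le_ivl[of "{1..<d}"]) (use that flat in auto)
  qed
  obtain i j where ij: "i \<in> {1..d}" "j \<in> {1..d}" and "f i \<noteq> f j"
    using nonconstant by blast
  moreover have "f i = f j"
  proof (cases "i \<le> j")
    case True
    then show ?thesis using ij by (intro flat_ivl) auto
  next
    case False
    then show ?thesis using ij by (intro flat_ivl[symmetric]) auto
  qed
  ultimately show False by simp
qed

lemma gapR_le_jump_ratio:
  assumes "1 \<le> i" "i \<le> d - 1" "norm (Z i) < norm (Z (i+1))"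
  shows "gapR d Z \<le> norm (Z (i+1)) / norm (Z i)"
  unfolding gapR_def using assms by (intro Min_le) auto

lemma gapR_gt_one:
  fixes Z :: "nat \<Rightarrow> complex"
  assumes nz: "\<And>i. 1 \<le> i \<Longrightarrow> i \<le> d \<Longrightarrow> Z i \<noteq> 0"
    and mono: "\<And>i. 1 \<le> i \<Longrightarrow> i < d \<Longrightarrow> norm (Z i) \<le> norm (Z (i+1))"
    and notall: "\<exists>i\<in>{1..d}. \<exists>j\<in>{1..d}. norm (Z i) \<noteq> norm (Z j)"
  shows "gapR d Z > 1"
  unfolding gapR_def
  using nz ex_strict_step_if_nonconstant[of d "\<lambda>i. norm (Z i)", OF mono notall]
  by (subst Min_gr_iff) fastforce+

lemma norm_prod_mult_gapR_le_top_prod: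
  fixes Z :: "nat \<Rightarrow> complex"
  assumes nz: "\<And>i. 1 \<le> i \<Longrightarrow> i \<le> d \<Longrightarrow> Z i \<noteq> 0"
    and mono: "\<And>i. 1 \<le> i \<Longrightarrow> i < d \<Longrightarrow> norm (Z i) \<le> norm (Z (i+1))"
    and notall: "\<exists>i\<in>{1..d}. \<exists>j\<in>{1..d}. norm (Z i) \<noteq> norm (Z j)"
    and "i \<in> jumpI d Z" "S \<subseteq> {1..d}" "card S = d - i" "S \<noteq> {i+1..d}"
  shows "norm (prod Z S) * gapR d Z \<le> norm (prod Z {i+1..d})"
proof -
  let ?T = "{i+1..d}"
  have norm_le: "norm (Z a) \<le> norm (Z b)" if "1 \<le> a" "a \<le> b" "b \<le> d" for a b
    by (rule lift_Suc_mono_le_ivl[of "{1..<d}"]) (use that mono in auto)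
  have "finite S" using \<open>S \<subseteq> {1..d}\<close> finite_subset by blast
  have "card S = card ?T" using \<open>card S = d - i\<close> by simp
  then have "S - ?T \<noteq> {}" "?T - S \<noteq> {}"
    using card_subset_eq[of ?T S] card_subset_eq[OF \<open>finite S\<close>, of ?T] \<open>S \<noteq> ?T\<close> by auto
  then obtain a b where "a \<in> S - ?T" "b \<in> ?T - S" by blast
  then have "1 \<le> i" "i \<le> d - 1"
    using \<open>S \<subseteq> {1..d}\<close> by auto
  then have jump: "norm (Z i) < norm (Z (i+1))"
    using \<open>i \<in> jumpI d Z\<close> by (auto simp: jumpI_def)
  have "norm (Z i) > 0" using nz \<open>1 \<le> i\<close> \<open>i \<le> d - 1\<close> by simp
  then have gap: "norm (Z i) * gapR d Z \<le> norm (Z (i+1))"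
    using gapR_le_jump_ratio[OF \<open>1 \<le> i\<close> \<open>i \<le> d - 1\<close> jump] by (simp add: field_simps)
  show ?thesis
  proof (rule norm_prod_exchange_le)
    show "norm (Z a) \<le> norm (Z i)" if "a \<in> S - ?T" for a
      using that \<open>S \<subseteq> {1..d}\<close> \<open>1 \<le> i\<close> \<open>i \<le> d - 1\<close> by (intro norm_le) auto
    show "norm (Z i) * gapR d Z \<le> norm (Z b)" if "b \<in> ?T - S" for b
      using that gap norm_le[of "i+1" b] \<open>1 \<le> i\<close> by auto
  qed (use \<open>finite S\<close> \<open>card S = card ?T\<close> \<open>S \<noteq> ?T\<close> gapR_gt_one[OF nz mono notall] in auto)
qed

lemma esym_eq_top_prod_mult:
  fixes Z :: "nat \<Rightarrow> complex"
  assumes nz: "\<And>i. 1 \<le> i \<Longrightarrow> i \<le> d \<Longrightarrow> Z i \<noteq> 0"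
    and mono: "\<And>i. 1 \<le> i \<Longrightarrow> i < d \<Longrightarrow> norm (Z i) \<le> norm (Z (i+1))"
    and notall: "\<exists>i\<in>{1..d}. \<exists>j\<in>{1..d}. norm (Z i) \<noteq> norm (Z j)"
    and i: "i \<in> jumpI d Z"
  shows "\<exists>c. esym d (d - i) Z = prod Z {i+1..d} * (1 + c)
              \<and> norm c \<le> (real (d choose i) - 1) / gapR d Z"
proof -
  have "i \<le> d" using i by (auto simp: jumpI_def)
  define F where "F = {S. S \<subseteq> {1..d} \<and> card S = d - i}"
  have "card F = d choose i"
    unfolding F_def using n_subsets[of "{1..d}" "d - i"] binomial_symmetric[OF \<open>i \<le> d\<close>] by simp
  have "\<exists>c. sum (prod Z) F = prod Z {i+1..d} * (1 + c)
            \<and> norm c \<le> (real (card F) - 1) / gapR d Z"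
  proof (rule sum_eq_dominant_term_mult)
    show "norm (prod Z S) * gapR d Z \<le> norm (prod Z {i+1..d})" if "S \<in> F - {{i+1..d}}" for S
      using that by (intro norm_prod_mult_gapR_le_top_prod[OF nz mono notall i]) (auto simp: F_def)
  qed (use nz gapR_gt_one[OF nz mono notall] in \<open>auto simp: F_def\<close>)
  then show ?thesis
    unfolding esym_def F_def[symmetric] \<open>card F = d choose i\<close> .
qed

theorem mainTheorem3:
  fixes d :: nat and Z :: "nat \<Rightarrow> complex"
  assumes nz: "\<And>i. 1 \<le> i \<Longrightarrow> i \<le> d \<Longrightarrow> Z i \<noteq> 0"
    and mono: "\<And>i. 1 \<le> i \<Longrightarrow> i < d \<Longrightarrow> norm (Z i) \<le> norm (Z (i+1))"
    and notall: "\<exists>i\<in>{1..d}. \<exists>j\<in>{1..d}. norm (Z i) \<noteq> norm (Z j)"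
  shows "\<forall>i\<in>jumpI d Z. \<exists>c::complex.
           esym d (d - i) Z = (\<Prod>j\<in>{i+1..d}. Z j) * (1 + c)
         \<and> norm c \<le> (real (d choose i) - 1) / gapR d Z
         \<and> (real (d choose i) - 1) / gapR d Z \<le> 2 ^ d / gapR d Z"
proof -
  have pow2_bound: "(real (d choose i) - 1) / gapR d Z \<le> 2 ^ d / gapR d Z" for i
  proof (rule divide_right_mono)
    have "real (d choose i) \<le> 2 ^ d"
      by (metis binomial_le_pow2 of_nat_le_iff of_nat_numeral of_nat_power)
    then show "real (d choose i) - 1 \<le> 2 ^ d" by linarith
  qed (use gapR_gt_one[OF nz mono notall] in linarith)
  show ?thesis
    using esym_eq_top_prod_mult[OF nz mono notall] pow2_bound by blast
qed

end
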